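(* For every $n\ge 1$, there is a one-to-one correspondence between the set of relative derangements of type $B$ on $[n]$ and the set of signed skew derangements on $[n]$.
   Context: A signed permutation on $[n]=\{1,\dots,n\}$ is a word $\pi_1\cdots\pi_n$ which is an ordinary permutation of $[n]$ in which some entries carry a bar. A relative derangement of type $B$ on $[n]$ is a signed permutation $\pi_1\cdots\pi_n$ such that for every $1\le i\le n-1$, the entry $i$ is not immediately followed by $i+1$, and $\bar i$ is not immediately followed by $\overline{i+1}$. A signed set on $[n]$ is the set $[n]$ with some of its elements barred. For a signed set $X$ on $[n]$, $X-1$ denotes the set obtained by subtracting $1$ from each element, with the rule $\bar i-1=\overline{i-1}$ (so $X-1$ is a signed set on $\{0,1,\dots,n-1\}$, possibly containing $\bar 0$). A signed skew derangement on $[n]$ is a pair consisting of a signed set $X$ on $[n]$ and a bijection $f:X\to X-1$ such that $f(x)\neq x$ for all $x\in X$ (equality as signed elements). *)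

theory Defs
  imports Main "HOL-Library.FuncSet"
begin

text \<open>A signed element is a pair (i, b) with b = True meaning that i carries a bar.\<close>
type_synonym selem = "nat \<times> bool"

definition signed_perm :: "nat \<Rightarrow> selem list \<Rightarrow> bool" where
  "signed_perm n w \<longleftrightarrow> length w = n \<and> distinct (map fst w) \<and> set (map fst w) = {1..n}"

definition rel_derangement_B :: "nat \<Rightarrow> selem list \<Rightarrow> bool" where
  "rel_derangement_B n w \<longleftrightarrow> signed_perm n w \<and>
     (\<forall>j. j + 1 < length w \<longrightarrow>
        \<not> (fst (w ! (j+1)) = fst (w ! j) + 1 \<and> snd (w ! (j+1)) = snd (w ! j)))"

definition rel_derangements_B :: "nat \<Rightarrow> selem list set" where
  "rel_derangements_B n = {w. rel_derangement_B n w}"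

definition signed_set :: "nat \<Rightarrow> selem set \<Rightarrow> bool" where
  "signed_set n X \<longleftrightarrow> fst ` X = {1..n} \<and> inj_on fst X"

definition shift_down :: "selem set \<Rightarrow> selem set" where
  "shift_down X = (\<lambda>(i, b). (i - 1, b)) ` X"

text \<open>Signed skew derangements: pairs (X, f) with f : X \<rightarrow> X - 1 a bijection
  without fixed points; f is taken extensional (undefined outside X) so that the
  pair is determined by the mathematical map.\<close>
definition signed_skew_derangements :: "nat \<Rightarrow> (selem set \<times> (selem \<Rightarrow> selem)) set" where
  "signed_skew_derangements n =
     {(X, f). signed_set n X \<and> f \<in> extensional X \<and> bij_betw f X (shift_down X)
              \<and> (\<forall>x\<in>X. f x \<noteq> x)}"

end

theory Submission
  imports Defs "HOL-Combinatorics.Permutations" "HOL-Combinatorics.Multiset_Permutations"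
begin

text \<open>Cut an arrangement u of a finite set of naturals before each of its left-to-right minima and
  read every block as a cycle. This is Foata's fundamental transformation, a bijection from
  arrangements to permutations \<pi>; as each block starts with its minimum, \<pi> a = a + 1 holds exactly
  when a is immediately followed by a + 1 in u. For a signed permutation w with underlying
  arrangement u, the map (i, sign of i) \<mapsto> (\<pi> i - 1, sign of \<pi> i) is a bijection from the signed set
  of w onto its shift by -1, and its fixed points are exactly the entries i immediately followed
  by i + 1 with the same sign. Hence it is fixed-point free iff w is a relative derangement, and
  every signed skew derangement arises this way from exactly one w.\<close>

definition consecutive_in :: "'a list \<Rightarrow> 'a \<Rightarrow> 'a \<Rightarrow> bool" where
  "consecutive_in xs a b \<longleftrightarrow> (\<exists>ys zs. xs = ys @ a # b # zs)"

lemma consecutive_in_Nil [simp]: "\<not> consecutive_in [] a b"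
  by (simp add: consecutive_in_def)

lemma consecutive_in_Cons:
  "consecutive_in (c # xs) a b \<longleftrightarrow> (c = a \<and> xs \<noteq> [] \<and> hd xs = b) \<or> consecutive_in xs a b"
proof
  assume "consecutive_in (c # xs) a b"
  then show "(c = a \<and> xs \<noteq> [] \<and> hd xs = b) \<or> consecutive_in xs a b"
    by (auto simp: consecutive_in_def Cons_eq_append_conv)
next
  assume "(c = a \<and> xs \<noteq> [] \<and> hd xs = b) \<or> consecutive_in xs a b"
  then show "consecutive_in (c # xs) a b"
    unfolding consecutive_in_def by (metis append_Cons append_Nil list.collapse)
qed

lemma consecutive_in_rev: "consecutive_in (rev xs) a b \<longleftrightarrow> consecutive_in xs b a"
  unfolding consecutive_in_def
  by (metis (no_types) append.assoc append_Cons append_Nil rev.simps(2) rev_append rev_rev_ident)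

lemma consecutive_in_iff_nth:
  "consecutive_in xs a b \<longleftrightarrow> (\<exists>j. Suc j < length xs \<and> xs ! j = a \<and> xs ! Suc j = b)"
proof
  assume "consecutive_in xs a b"
  then obtain ys zs where "xs = ys @ a # b # zs" by (auto simp: consecutive_in_def)
  then show "\<exists>j. Suc j < length xs \<and> xs ! j = a \<and> xs ! Suc j = b"
    by (intro exI[of _ "length ys"]) (simp add: nth_append)
next
  assume "\<exists>j. Suc j < length xs \<and> xs ! j = a \<and> xs ! Suc j = b"
  then obtain j where j: "Suc j < length xs" "xs ! j = a" "xs ! Suc j = b" by blast
  then have "xs = take j xs @ a # b # drop (Suc (Suc j)) xs"
    by (metis Cons_nth_drop_Suc Suc_lessD append_take_drop_id)
  then show "consecutive_in xs a b" by (auto simp: consecutive_in_def)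
qed

lemma consecutive_in_set: "consecutive_in xs a b \<Longrightarrow> a \<in> set xs \<and> b \<in> set xs"
  by (auto simp: consecutive_in_def)

lemma not_consecutive_in_hd: "distinct xs \<Longrightarrow> \<not> consecutive_in xs a (hd xs)"
  by (cases xs) (auto simp: consecutive_in_def Cons_eq_append_conv)

text \<open>word_perm (rev u) is the fundamental transformation of u, built by appending the letters
  of u one at a time: a new left-to-right minimum starts a new cycle, any other letter is
  inserted into the current last cycle right after the previous letter.\<close>

fun word_perm :: "nat list \<Rightarrow> nat \<Rightarrow> nat" where
  "word_perm [] = id"
| "word_perm (a # v) =
     (if \<forall>x\<in>set v. a < x then word_perm v else word_perm v \<circ> transpose (hd v) a)"

declare word_perm.simps(2) [simp del]

lemma word_perm_Cons_min: "\<forall>x\<in>set v. a < x \<Longrightarrow> word_perm (a # v) = word_perm v"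
  by (simp add: word_perm.simps(2))

lemma word_perm_Cons_not_min:
  "\<not> (\<forall>x\<in>set v. a < x) \<Longrightarrow> word_perm (a # v) = word_perm v \<circ> transpose (hd v) a"
  by (simp only: word_perm.simps(2) if_False)

lemma word_perm_permutes: "distinct v \<Longrightarrow> word_perm v permutes set v"
proof (induction v)
  case Nil
  then show ?case by (simp add: id_def)
next
  case (Cons a v)
  then have perm: "word_perm v permutes set (a # v)" by (auto intro: permutes_subset)
  show ?case
  proof (cases "\<forall>x\<in>set v. a < x")
    case True
    then show ?thesis using perm by (simp add: word_perm_Cons_min)
  next
    case False
    then have "hd v \<in> set (a # v)" by (cases v) auto
    then have "transpose (hd v) a permutes set (a # v)" by (simp add: permutes_swap_id)
    then show ?thesis
      unfolding word_perm_Cons_not_min[OF False] by (rule permutes_compose[OF _ perm])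
  qed
qed

lemma word_perm_hd: "distinct v \<Longrightarrow> v \<noteq> [] \<Longrightarrow> word_perm v (hd v) = Min (set v)"
proof (induction v)
  case Nil
  then show ?case by simp
next
  case (Cons a v)
  show ?case
  proof (cases "\<forall>x\<in>set v. a < x")
    case True
    have "word_perm v a = a"
      using Cons.prems word_perm_permutes[of v] by (simp add: permutes_not_in)
    moreover have "Min (set (a # v)) = a" using True by (auto intro!: Min_eqI simp: less_imp_le)
    ultimately show ?thesis using True by (simp add: word_perm_Cons_min)
  next
    case False
    then have "v \<noteq> []" by auto
    then have "word_perm (a # v) a = Min (set v)"
      using Cons by (simp add: word_perm_Cons_not_min[OF False])
    also have "\<dots> = Min (set (a # v))"
      using False \<open>v \<noteq> []\<close> Cons.prems by (auto simp: Min_insert min_def not_less)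
    finally show ?thesis by simp
  qed
qed

lemma word_perm_eq_Suc_iff:
  "distinct v \<Longrightarrow> word_perm v a = Suc a \<longleftrightarrow> consecutive_in v (Suc a) a"
proof (induction v arbitrary: a)
  case Nil
  then show ?case by simp
next
  case (Cons b v)
  have b_fixed: "word_perm v b = b"
    using Cons.prems word_perm_permutes[of v] by (simp add: permutes_not_in)
  show ?case
  proof (cases "\<forall>x\<in>set v. b < x")
    case True
    then have "\<not> (b = Suc a \<and> v \<noteq> [] \<and> hd v = a)"
      by (metis Suc_lessD hd_in_set less_irrefl_nat)
    then show ?thesis using True Cons by (auto simp: consecutive_in_Cons word_perm_Cons_min)
  next
    case False
    then obtain x where x: "x \<in> set v" "x \<le> b" by (auto simp: not_less)
    then have "v \<noteq> []" by auto
    note step = word_perm_Cons_not_min[OF False]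
    consider "a = hd v" | "a = b" | "a \<noteq> hd v" "a \<noteq> b" by blast
    then show ?thesis
    proof cases
      case 1
      then have "word_perm (b # v) a = b" using step b_fixed by (simp add: transpose_def)
      then show ?thesis
        using 1 \<open>v \<noteq> []\<close> not_consecutive_in_hd[of v] Cons.prems by (auto simp: consecutive_in_Cons)
    next
      case 2
      then have "word_perm (b # v) a = Min (set v)"
        using step word_perm_hd[of v] Cons.prems \<open>v \<noteq> []\<close> by (simp add: transpose_def)
      also have "\<dots> \<le> a" using x 2 by (meson List.finite_set Min_le order_trans)
      finally have "word_perm (b # v) a \<noteq> Suc a" by auto
      moreover have "\<not> consecutive_in (b # v) (Suc a) a"
        using 2 Cons.prems consecutive_in_set[of v "Suc a" a] by (auto simp: consecutive_in_Cons)
      ultimately show ?thesis by simp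
    next
      case 3
      then have "word_perm (b # v) a = word_perm v a" using step by (simp add: transpose_def)
      then show ?thesis using Cons 3 by (auto simp: consecutive_in_Cons)
    qed
  qed
qed

lemma word_perm_inj:
  "\<lbrakk>distinct v; distinct v'; set v = set v'; word_perm v = word_perm v'\<rbrakk> \<Longrightarrow> v = v'"
proof (induction v arbitrary: v')
  case Nil
  then show ?case by simp
next
  case (Cons b v)
  obtain b' w where v': "v' = b' # w" using Cons.prems by (cases v') auto
  have perm: "word_perm (b # v) permutes set (b # v)" using Cons.prems word_perm_permutes by blast
  have "word_perm (b # v) b = word_perm (b # v) b'"
    using word_perm_hd[of "b # v"] word_perm_hd[of v'] Cons.prems v' by simp
  then have "b = b'" using permutes_inj[OF perm] by (auto dest: injD)
  then have sw: "set v = set w" and dw: "distinct w" using Cons.prems v' by auto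
  have "word_perm v = word_perm w"
  proof (cases "\<forall>x\<in>set v. b < x")
    case True
    then show ?thesis
      using Cons.prems v' \<open>b = b'\<close> sw by (simp add: word_perm_Cons_min)
  next
    case False
    then have "\<not> (\<forall>x\<in>set w. b < x)" using sw by simp
    note step_v = word_perm_Cons_not_min[OF False] and
      step_w = word_perm_Cons_not_min[OF this]
    have step_w': "word_perm (b # v) = word_perm w \<circ> transpose (hd w) b"
      using step_w Cons.prems(4) v' \<open>b = b'\<close> by (simp add: comp_def)
    have "b \<notin> set v" "b \<notin> set w" using Cons.prems sw by auto
    then have "word_perm v b = b" "word_perm w b = b"
      using word_perm_permutes[of v] word_perm_permutes[of w] Cons.prems(1) dw
      by (simp_all add: permutes_not_in)
    then have "word_perm (b # v) (hd v) = b" "word_perm (b # v) (hd w) = b"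
      by (simp add: step_v, simp add: step_w')
    then have "hd v = hd w" using permutes_inj[OF perm] by (metis injD)
    have "word_perm v = word_perm (b # v) \<circ> transpose (hd v) b"
      unfolding step_v by (simp only: o_assoc[symmetric] transpose_comp_involutory comp_id)
    also have "\<dots> = word_perm w"
      unfolding step_w' \<open>hd v = hd w\<close>
      by (simp only: o_assoc[symmetric] transpose_comp_involutory comp_id)
    finally show ?thesis .
  qed
  then show ?case using Cons.IH Cons.prems dw sw v' \<open>b = b'\<close> by auto
qed

lemma bij_betw_word_perm_rev:
  assumes "finite S"
  shows "bij_betw (\<lambda>u. word_perm (rev u)) (permutations_of_set S) {p. p permutes S}"
proof -
  let ?F = "\<lambda>u. word_perm (rev u)"
  have inj: "inj_on ?F (permutations_of_set S)"
    using word_perm_inj[of "rev u" "rev u'" for u u']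
    by (intro inj_onI) (auto simp: permutations_of_set_def)
  have sub: "?F ` permutations_of_set S \<subseteq> {p. p permutes S}"
    using word_perm_permutes[of "rev u" for u] by (auto simp: permutations_of_set_def)
  have "card (?F ` permutations_of_set S) = card {p. p permutes S}"
    using card_image[OF inj] assms by (simp add: card_permutations)
  then have "?F ` permutations_of_set S = {p. p permutes S}"
    using sub assms by (intro card_subset_eq) (auto simp: finite_permutations)
  then show ?thesis using inj by (simp add: bij_betw_def)
qed

lemma word_perm_rev_eq_Suc_iff:
  "distinct u \<Longrightarrow> word_perm (rev u) a = Suc a \<longleftrightarrow> consecutive_in u a (Suc a)"
  by (simp add: word_perm_eq_Suc_iff consecutive_in_rev)

definition sign_graph :: "nat set \<Rightarrow> (nat \<Rightarrow> bool) \<Rightarrow> selem set" where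
  "sign_graph A s = (\<lambda>i. (i, s i)) ` A"

lemma shift_down_sign_graph: "shift_down (sign_graph A s) = (\<lambda>i. (i - 1, s i)) ` A"
  unfolding shift_down_def sign_graph_def image_image by simp

lemma signed_set_iff_sign_graph: "signed_set n X \<longleftrightarrow> (\<exists>s. X = sign_graph {1..n} s)"
proof
  assume X: "signed_set n X"
  define s where "s j = (SOME b. (j, b) \<in> X)" for j
  have s_mem: "(j, s j) \<in> X" if "j \<in> {1..n}" for j
  proof -
    from that X obtain b where "(j, b) \<in> X" unfolding signed_set_def by force
    then show ?thesis unfolding s_def by (rule someI)
  qed
  have "x \<in> sign_graph {1..n} s" if "x \<in> X" for x
  proof -
    have "fst x \<in> {1..n}" using that X by (auto simp: signed_set_def)
    moreover from this have "x = (fst x, s (fst x))"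
      using s_mem[of "fst x"] that X unfolding signed_set_def by (metis fst_conv inj_onD)
    ultimately show ?thesis unfolding sign_graph_def by (rule rev_image_eqI)
  qed
  then have "X = sign_graph {1..n} s"
    using s_mem unfolding sign_graph_def by blast
  then show "\<exists>s. X = sign_graph {1..n} s" by blast
next
  assume "\<exists>s. X = sign_graph {1..n} s"
  then show "signed_set n X"
    by (auto simp: signed_set_def sign_graph_def image_image inj_on_def)
qed

lemma inj_on_shift_sign:
  fixes A :: "nat set"
  assumes "0 \<notin> A"
  shows "inj_on (\<lambda>i. (i - 1, s i)) A"
proof (rule inj_onI)
  fix i j assume "i \<in> A" "j \<in> A" "(i - 1, s i) = (j - 1, s j)"
  moreover have "i \<noteq> 0" "j \<noteq> 0" using assms \<open>i \<in> A\<close> \<open>j \<in> A\<close> by metis+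
  ultimately show "i = j" by auto
qed

definition skew_map :: "(nat \<Rightarrow> nat) \<Rightarrow> (nat \<Rightarrow> bool) \<Rightarrow> selem \<Rightarrow> selem" where
  "skew_map \<pi> s x = (\<pi> (fst x) - 1, s (\<pi> (fst x)))"

lemma bij_betw_skew_map:
  assumes "\<pi> permutes A" "0 \<notin> A"
  shows "bij_betw (skew_map \<pi> s) (sign_graph A s) (shift_down (sign_graph A s))"
proof -
  have "bij_betw fst (sign_graph A s) A"
    by (auto simp: bij_betw_def sign_graph_def inj_on_def image_image)
  moreover have "bij_betw (\<lambda>i. (i - 1, s i)) A (shift_down (sign_graph A s))"
    using inj_on_shift_sign[OF assms(2)] by (simp add: bij_betw_def shift_down_sign_graph)
  ultimately have "bij_betw ((\<lambda>i. (i - 1, s i)) \<circ> (\<pi> \<circ> fst)) (sign_graph A s)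
      (shift_down (sign_graph A s))"
    using permutes_imp_bij[OF assms(1)] by (intro bij_betw_trans)
  moreover have "(\<lambda>i. (i - 1, s i)) \<circ> (\<pi> \<circ> fst) = skew_map \<pi> s"
    by (simp add: skew_map_def fun_eq_iff)
  ultimately show ?thesis by simp
qed

lemma skew_map_obtain:
  assumes "bij_betw f (sign_graph A s) (shift_down (sign_graph A s))" "0 \<notin> A"
  obtains \<pi> where "\<pi> permutes A" "\<And>i. i \<in> A \<Longrightarrow> f (i, s i) = skew_map \<pi> s (i, s i)"
proof -
  let ?h = "\<lambda>i. (i - 1, s i)"
  have h: "bij_betw ?h A (shift_down (sign_graph A s))"
    using inj_on_shift_sign[OF assms(2)] by (simp add: bij_betw_def shift_down_sign_graph)
  have "bij_betw (\<lambda>i. (i, s i)) A (sign_graph A s)"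
    by (auto simp: bij_betw_def sign_graph_def inj_on_def)
  then have "bij_betw (inv_into A ?h \<circ> (f \<circ> (\<lambda>i. (i, s i)))) A A"
    using assms(1) bij_betw_inv_into[OF h] by (intro bij_betw_trans)
  moreover define \<pi> where "\<pi> i = (if i \<in> A then inv_into A ?h (f (i, s i)) else i)" for i
  ultimately have "bij_betw \<pi> A A" by (auto simp: comp_def cong: bij_betw_cong)
  then have "\<pi> permutes A" by (rule bij_imp_permutes) (simp add: \<pi>_def)
  moreover have "f (i, s i) = skew_map \<pi> s (i, s i)" if "i \<in> A" for i
  proof -
    have "f (i, s i) \<in> shift_down (sign_graph A s)"
      using assms(1) that by (auto simp: bij_betw_def sign_graph_def)
    then show ?thesis
      using bij_betw_inv_into_right[OF h] that by (simp add: skew_map_def \<pi>_def)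
  qed
  ultimately show ?thesis using that by blast
qed

lemma skew_map_fixed_iff:
  "\<pi> i \<noteq> 0 \<Longrightarrow> skew_map \<pi> s (i, s i) = (i, s i) \<longleftrightarrow> \<pi> i = Suc i \<and> s (Suc i) = s i"
  by (cases "\<pi> i") (auto simp: skew_map_def)

definition sign_in :: "selem list \<Rightarrow> nat \<Rightarrow> bool" where
  "sign_in w i = the (map_of w i)"

lemma sign_in_eq: "distinct (map fst w) \<Longrightarrow> (i, b) \<in> set w \<Longrightarrow> sign_in w i = b"
  by (simp add: sign_in_def)

lemma set_eq_sign_graph:
  assumes "distinct (map fst w)"
  shows "set w = sign_graph (set (map fst w)) (sign_in w)"
proof -
  have "x = (fst x, sign_in w (fst x))" if "x \<in> set w" for x
    using that sign_in_eq[OF assms, of "fst x" "snd x"] by simp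
  then show ?thesis
    unfolding sign_graph_def set_map image_image by (auto intro: rev_image_eqI)
qed

lemma signed_word_eqI:
  assumes "distinct (map fst w)" "map fst w = map fst w'" "set w = set w'"
  shows "w = w'"
proof (rule nth_equalityI)
  show "length w = length w'" using arg_cong[OF assms(2), of length] by simp
  fix j assume j: "j < length w"
  have "inj_on fst (set w)" using assms(1) by (simp add: distinct_map)
  moreover have "fst (w ! j) = fst (w' ! j)"
    using arg_cong[OF assms(2), of "\<lambda>xs. xs ! j"] j \<open>length w = length w'\<close> by simp
  moreover have "w ! j \<in> set w" using j by simp
  moreover have "w' ! j \<in> set w" using j \<open>length w = length w'\<close> assms(3) by simp
  ultimately show "w ! j = w' ! j" by (rule inj_onD)
qed

lemma rel_derangement_B_iff:
  "rel_derangement_B n w \<longleftrightarrow> signed_perm n w \<and>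
     (\<forall>a. consecutive_in (map fst w) a (Suc a) \<longrightarrow> sign_in w (Suc a) \<noteq> sign_in w a)"
proof (cases "signed_perm n w")
  case True
  then have sign: "sign_in w (fst (w ! j)) = snd (w ! j)" if "j < length w" for j
    using that by (simp add: sign_in_eq signed_perm_def)
  have "(fst (w ! (j + 1)) = fst (w ! j) + 1 \<and> snd (w ! (j + 1)) = snd (w ! j)) \<longleftrightarrow>
      (fst (w ! Suc j) = Suc (fst (w ! j)) \<and>
       sign_in w (Suc (fst (w ! j))) = sign_in w (fst (w ! j)))"
    if "Suc j < length w" for j
    using that sign[of j] sign[of "Suc j"] by auto
  moreover have "consecutive_in (map fst w) a (Suc a) \<longleftrightarrow>
      (\<exists>j. Suc j < length w \<and> fst (w ! j) = a \<and> fst (w ! Suc j) = Suc a)" for a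
    by (auto simp: consecutive_in_iff_nth)
  ultimately show ?thesis
    using True unfolding rel_derangement_B_def by (metis Suc_eq_plus1)
qed (simp add: rel_derangement_B_def)

definition skew_derangement_of :: "selem list \<Rightarrow> selem set \<times> (selem \<Rightarrow> selem)" where
  "skew_derangement_of w =
     (set w, restrict (skew_map (word_perm (rev (map fst w))) (sign_in w)) (set w))"

lemma skew_derangement_of_mem:
  assumes "rel_derangement_B n w"
  shows "skew_derangement_of w \<in> signed_skew_derangements n"
proof -
  let ?u = "map fst w" and ?s = "sign_in w"
  let ?\<pi> = "word_perm (rev ?u)"
  have u: "distinct ?u" "set ?u = {1..n}"
    using assms by (simp_all add: rel_derangement_B_def signed_perm_def)
  have X: "set w = sign_graph {1..n} ?s" using set_eq_sign_graph[OF u(1)] u(2) by simp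
  have \<pi>: "?\<pi> permutes {1..n}" using word_perm_permutes[of "rev ?u"] u by simp
  have "bij_betw (skew_map ?\<pi> ?s) (set w) (shift_down (set w))"
    unfolding X by (rule bij_betw_skew_map[OF \<pi>]) simp
  moreover have "signed_set n (set w)" unfolding X signed_set_iff_sign_graph by blast
  moreover have "skew_map ?\<pi> ?s x \<noteq> x" if "x \<in> set w" for x
  proof
    assume fixed: "skew_map ?\<pi> ?s x = x"
    obtain i where i: "i \<in> {1..n}" "x = (i, ?s i)" using \<open>x \<in> set w\<close> X by (auto simp: sign_graph_def)
    then have "?\<pi> i \<in> {1..n}" using permutes_in_image[OF \<pi>] by simp
    then have "?\<pi> i \<noteq> 0" by simp
    then have "?\<pi> i = Suc i" "?s (Suc i) = ?s i" using fixed i skew_map_fixed_iff by blast+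
    then show False
      using assms word_perm_rev_eq_Suc_iff[OF u(1)] by (simp add: rel_derangement_B_iff)
  qed
  ultimately show ?thesis
    by (simp add: skew_derangement_of_def signed_skew_derangements_def cong: bij_betw_cong)
qed

lemma inj_on_skew_derangement_of: "inj_on skew_derangement_of (rel_derangements_B n)"
proof (rule inj_onI)
  fix w w' assume "w \<in> rel_derangements_B n" "w' \<in> rel_derangements_B n"
    and eq: "skew_derangement_of w = skew_derangement_of w'"
  let ?u = "map fst w" and ?u' = "map fst w'"
  have u: "distinct ?u" "set ?u = {1..n}" "distinct ?u'" "set ?u' = {1..n}"
    using \<open>w \<in> _\<close> \<open>w' \<in> _\<close>
    by (simp_all add: rel_derangements_B_def rel_derangement_B_def signed_perm_def)
  have set_eq: "set w = set w'" using eq by (simp add: skew_derangement_of_def)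
  let ?\<pi> = "word_perm (rev ?u)" and ?\<pi>' = "word_perm (rev ?u')"
  have \<pi>: "?\<pi> permutes {1..n}" "?\<pi>' permutes {1..n}"
    using word_perm_permutes[of "rev ?u"] word_perm_permutes[of "rev ?u'"] u by simp_all
  have "?\<pi> i = ?\<pi>' i" if "i \<in> {1..n}" for i
  proof -
    have "(i, sign_in w i) \<in> set w"
      using that set_eq_sign_graph[OF u(1)] u(2) by (auto simp: sign_graph_def)
    then have "?\<pi> i - 1 = ?\<pi>' i - 1"
      using fun_cong[OF arg_cong[OF eq, of snd], of "(i, sign_in w i)"] set_eq
      by (simp add: skew_derangement_of_def skew_map_def)
    moreover have "?\<pi> i \<in> {1..n}" "?\<pi>' i \<in> {1..n}"
      using that permutes_in_image[OF \<pi>(1)] permutes_in_image[OF \<pi>(2)] by simp_all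
    ultimately show ?thesis by auto
  qed
  then have "?\<pi> = ?\<pi>'" using \<pi> by (metis permutes_not_in ext)
  then have "?u = ?u'" using word_perm_inj[of "rev ?u" "rev ?u'"] u by simp
  then show "w = w'" using signed_word_eqI u(1) set_eq by blast
qed

lemma signed_skew_derangements_subset:
  "signed_skew_derangements n \<subseteq> skew_derangement_of ` rel_derangements_B n"
proof
  fix y assume "y \<in> signed_skew_derangements n"
  then obtain X f where y: "y = (X, f)" and "signed_set n X" "f \<in> extensional X"
    and f: "bij_betw f X (shift_down X)" "\<forall>x\<in>X. f x \<noteq> x"
    by (auto simp: signed_skew_derangements_def)
  then obtain s where X: "X = sign_graph {1..n} s" by (auto simp: signed_set_iff_sign_graph)
  obtain \<pi> where \<pi>: "\<pi> permutes {1..n}"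
    and f_eq: "\<And>i. i \<in> {1..n} \<Longrightarrow> f (i, s i) = skew_map \<pi> s (i, s i)"
    using skew_map_obtain[of f "{1..n}" s] f(1) X by auto
  have "\<pi> \<in> (\<lambda>u. word_perm (rev u)) ` permutations_of_set {1..n}"
    using bij_betw_word_perm_rev[of "{1..n}"] \<pi> by (simp add: bij_betw_def)
  then obtain u where u: "u \<in> permutations_of_set {1..n}" "word_perm (rev u) = \<pi>" by blast
  have u': "distinct u" "set u = {1..n}" using u(1) by (auto simp: permutations_of_set_def)
  define w where "w = map (\<lambda>i. (i, s i)) u"
  have w: "map fst w = u" "set w = X" using X u'(2) by (simp_all add: w_def comp_def sign_graph_def)
  have sign: "sign_in w i = s i" if "i \<in> {1..n}" for i
    using that u' w by (intro sign_in_eq) (auto simp: w_def)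
  have "rel_derangement_B n w"
    unfolding rel_derangement_B_iff
  proof (intro conjI allI impI)
    show "signed_perm n w"
      using u' w distinct_card[OF u'(1)] by (simp add: signed_perm_def w_def)
  next
    fix a assume a: "consecutive_in (map fst w) a (Suc a)"
    have "a \<in> {1..n}" "Suc a \<in> {1..n}" "\<pi> a = Suc a"
      using a consecutive_in_set[OF a] word_perm_rev_eq_Suc_iff[OF u'(1)] u'(2) w(1) u(2) by auto
    show "sign_in w (Suc a) \<noteq> sign_in w a"
    proof
      assume "sign_in w (Suc a) = sign_in w a"
      then have "f (a, s a) = (a, s a)"
        using \<open>a \<in> {1..n}\<close> \<open>Suc a \<in> {1..n}\<close> \<open>\<pi> a = Suc a\<close> sign f_eq[of a]
          skew_map_fixed_iff[of \<pi> a s]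
        by simp
      moreover have "(a, s a) \<in> X" using \<open>a \<in> {1..n}\<close> X by (simp add: sign_graph_def)
      ultimately show False using f(2) by blast
    qed
  qed
  moreover have "skew_derangement_of w = y"
  proof -
    have "restrict (skew_map \<pi> (sign_in w)) X = f"
    proof (rule extensionalityI[OF restrict_extensional \<open>f \<in> extensional X\<close>])
      fix x assume "x \<in> X"
      then obtain i where i: "i \<in> {1..n}" "x = (i, s i)" using X by (auto simp: sign_graph_def)
      then have "\<pi> i \<in> {1..n}" using permutes_in_image[OF \<pi>] by simp
      then show "restrict (skew_map \<pi> (sign_in w)) X x = f x"
        using \<open>x \<in> X\<close> i f_eq sign by (simp add: skew_map_def)
    qed
    then show ?thesis using w u(2) y by (simp add: skew_derangement_of_def)
  qed
  ultimately show "y \<in> skew_derangement_of ` rel_derangements_B n"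
    by (auto simp: rel_derangements_B_def)
qed

theorem theorem2:
  fixes n :: nat
  assumes "n \<ge> 1"
  shows "\<exists>\<phi>. bij_betw \<phi> (rel_derangements_B n) (signed_skew_derangements n)"
proof -
  have "skew_derangement_of ` rel_derangements_B n \<subseteq> signed_skew_derangements n"
    using skew_derangement_of_mem by (auto simp: rel_derangements_B_def)
  then have "skew_derangement_of ` rel_derangements_B n = signed_skew_derangements n"
    using signed_skew_derangements_subset by (rule equalityI)
  then show ?thesis using inj_on_skew_derangement_of by (auto simp: bij_betw_def)
qed

end
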